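(* Let $G$ be a group with identity $e$, $A$ a finite set with $|A|\ge2$, $S\subseteq G$ finite with $e\in S$, and suppose $(\mathcal P,f)$ generates a local map $\mu:A^S\to A$. (1) If there exist $z,w\in\mathcal P^c$ with $z\neq w$ and $\mathrm{Res}_e(z)=\mathrm{Res}_e(w)$, then $e$ is essential for $\mu$. (2) If $f$ is well-behaved and there exist $p,q\in\mathcal P$ with $p\neq q$ and $\mathrm{Res}_e(p)=\mathrm{Res}_e(q)$, then $e$ is essential for $\mu$.
   Context: $A^S$ is the set of functions $S\to A$. For $s\in S$, $\mathrm{Res}_s(z)=z|_{S\setminus\{s\}}$. An element $s\in S$ is essential for $\mu$ if there exist $z,w\in A^S$ with $\mathrm{Res}_s(z)=\mathrm{Res}_s(w)$ but $\mu(z)\neq\mu(w)$. The pair $(\mathcal P,f)$ generates $\mu$ if $\mathcal P=\{z\in A^S:\mu(z)\neq z(e)\}$ and $f:\mathcal P\to A$ is the restriction of $\mu$ to $\mathcal P$; $\mathcal P^c=A^S\setminus\mathcal P$. The function $f$ is well-behaved if for all $p,q\in\mathcal P$: $p(e)=q(e)$ if and only if $f(p)=f(q)$. *)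

theory Defs
  imports "HOL-Algebra.Group" "HOL-Library.FuncSet"
begin

(* Configurations A^S are modelled as extensional functions S ->E A (PiE). *)

definition Res :: "'g set \<Rightarrow> 'g \<Rightarrow> ('g \<Rightarrow> 'a) \<Rightarrow> ('g \<Rightarrow> 'a)" where
  "Res S s z = restrict z (S - {s})"

definition essential :: "'g set \<Rightarrow> 'a set \<Rightarrow> (('g \<Rightarrow> 'a) \<Rightarrow> 'a) \<Rightarrow> 'g \<Rightarrow> bool" where
  "essential S A \<mu> s \<longleftrightarrow>
     (\<exists>z \<in> S \<rightarrow>\<^sub>E A. \<exists>w \<in> S \<rightarrow>\<^sub>E A. Res S s z = Res S s w \<and> \<mu> z \<noteq> \<mu> w)"

definition generates :: "'g set \<Rightarrow> 'a set \<Rightarrow> 'g \<Rightarrow> (('g \<Rightarrow> 'a) \<Rightarrow> 'a)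
    \<Rightarrow> ('g \<Rightarrow> 'a) set \<Rightarrow> (('g \<Rightarrow> 'a) \<Rightarrow> 'a) \<Rightarrow> bool" where
  "generates S A e \<mu> P f \<longleftrightarrow>
     P = {z \<in> S \<rightarrow>\<^sub>E A. \<mu> z \<noteq> z e} \<and> (\<forall>p \<in> P. f p = \<mu> p)"

definition well_behaved :: "'g \<Rightarrow> ('g \<Rightarrow> 'a) set \<Rightarrow> (('g \<Rightarrow> 'a) \<Rightarrow> 'a) \<Rightarrow> bool" where
  "well_behaved e P f \<longleftrightarrow> (\<forall>p \<in> P. \<forall>q \<in> P. p e = q e \<longleftrightarrow> f p = f q)"

end

theory Submission
  imports Defs
begin

text \<open>Two configurations of \<open>A\<^sup>S\<close> with the same restriction to \<open>S - {e}\<close> differ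
  exactly when they differ at \<open>e\<close>. Outside \<open>\<P>\<close> the map \<open>\<mu>\<close> reads off the value at \<open>e\<close>,
  and on \<open>\<P>\<close> a well-behaved \<open>f\<close> separates values at \<open>e\<close>; either way \<open>\<mu>\<close> takes
  different values on two configurations agreeing off \<open>e\<close>.\<close>

lemma Res_eq_imp_neq_at:
  assumes "z \<in> S \<rightarrow>\<^sub>E A" "w \<in> S \<rightarrow>\<^sub>E A" "Res S s z = Res S s w" "z \<noteq> w"
  shows "z s \<noteq> w s"
proof
  assume same_at_s: "z s = w s"
  have "z x = w x" for x
  proof (cases "x \<in> S - {s}")
    case True
    then show ?thesis using assms(3) unfolding Res_def by (metis restrict_apply')
  next
    case False
    then show ?thesis using assms(1,2) same_at_s by (metis DiffI PiE_arb singletonD)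
  qed
  then show False using assms(4) by blast
qed

lemma essentialI:
  assumes "z \<in> S \<rightarrow>\<^sub>E A" "w \<in> S \<rightarrow>\<^sub>E A" "Res S s z = Res S s w" "\<mu> z \<noteq> \<mu> w"
  shows "essential S A \<mu> s"
  using assms unfolding essential_def by blast

lemma essential_if_Res_eq_outside_generator:
  assumes "generates S A e \<mu> P f"
    and "z \<in> (S \<rightarrow>\<^sub>E A) - P" "w \<in> (S \<rightarrow>\<^sub>E A) - P" "z \<noteq> w" "Res S e z = Res S e w"
  shows "essential S A \<mu> e"
proof (rule essentialI)
  have "\<mu> z = z e" "\<mu> w = w e"
    using assms(1-3) unfolding generates_def by auto
  then show "\<mu> z \<noteq> \<mu> w"
    using Res_eq_imp_neq_at assms(2-5) by (metis DiffD1)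
qed (use assms in auto)

lemma essential_if_Res_eq_in_generator:
  assumes "generates S A e \<mu> P f" "well_behaved e P f"
    and "p \<in> P" "q \<in> P" "p \<noteq> q" "Res S e p = Res S e q"
  shows "essential S A \<mu> e"
proof -
  have P_def: "P = {z \<in> S \<rightarrow>\<^sub>E A. \<mu> z \<noteq> z e}" and f_eq: "\<forall>p \<in> P. f p = \<mu> p"
    using assms(1) unfolding generates_def by auto
  have configs: "p \<in> S \<rightarrow>\<^sub>E A" "q \<in> S \<rightarrow>\<^sub>E A"
    using assms(3,4) P_def by auto
  have "p e \<noteq> q e"
    using Res_eq_imp_neq_at[OF configs assms(6,5)] .
  then have "f p \<noteq> f q"
    using assms(2-4) unfolding well_behaved_def by blast
  then have "\<mu> p \<noteq> \<mu> q"
    using f_eq assms(3,4) by simp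
  then show ?thesis
    using essentialI[OF configs assms(6)] by blast
qed

theorem mainTheorem4:
  fixes G :: "('g, 'b) monoid_scheme"
    and A :: "'a set" and S :: "'g set"
    and \<mu> :: "('g \<Rightarrow> 'a) \<Rightarrow> 'a"
    and P :: "('g \<Rightarrow> 'a) set" and f :: "('g \<Rightarrow> 'a) \<Rightarrow> 'a"
  assumes "group G"
    and "finite A" and "card A \<ge> 2"
    and "S \<subseteq> carrier G" and "finite S" and "\<one>\<^bsub>G\<^esub> \<in> S"
    and "\<mu> \<in> (S \<rightarrow>\<^sub>E A) \<rightarrow> A"
    and "generates S A \<one>\<^bsub>G\<^esub> \<mu> P f"
  shows "((\<exists>z \<in> (S \<rightarrow>\<^sub>E A) - P. \<exists>w \<in> (S \<rightarrow>\<^sub>E A) - P.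
              z \<noteq> w \<and> Res S \<one>\<^bsub>G\<^esub> z = Res S \<one>\<^bsub>G\<^esub> w)
            \<longrightarrow> essential S A \<mu> \<one>\<^bsub>G\<^esub>)
       \<and> ((well_behaved \<one>\<^bsub>G\<^esub> P f \<and>
            (\<exists>p \<in> P. \<exists>q \<in> P. p \<noteq> q \<and> Res S \<one>\<^bsub>G\<^esub> p = Res S \<one>\<^bsub>G\<^esub> q))
            \<longrightarrow> essential S A \<mu> \<one>\<^bsub>G\<^esub>)"
  using essential_if_Res_eq_outside_generator[OF assms(8)]
    essential_if_Res_eq_in_generator[OF assms(8)]
  by blast

end
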